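(* Let $g\ge 2$, $n\ge 2$, let $(t_1,\ldots,t_n)$ be a generic $n$-tuple of elements of $T$, let $l\neq m$ be elements of $\{1,\ldots,n\}$, let $A$ be a subset of $\{a_1,\ldots,a_g,b_1,\ldots,b_g\}\cup\{c_j \mid j\in\{1,\ldots,n\}\setminus\{l,m\}\}$, and let $(i,j,k)$ and $(u,v,w)$ be permutations of $(1,2,3)$. Then the collection of sections $$\{s^l_{ij}(x), s^l_{ik}(x) \mid x\in A\}\cup\{s^l_{u,j}(c_m), s^l_{u,k}(c_m)\}$$ has the same common vanishing locus in $S_g(t_1,\ldots,t_n)$ as the collection $$\{s^m_{uv}(x), s^m_{uw}(x)\mid x\in A\}\cup\{s^m_{i,v}(c_l), s^m_{i,w}(c_l)\}.$$
   Context: Let $\Sigma$ be a compact Riemann surface of genus $g$, $p_1,\ldots,p_n\in\Sigma$ distinct points, and fix the presentation $\pi_1(\Sigma\setminus\{p_1,\ldots,p_n\}) = \langle a_1,\ldots,a_g,b_1,\ldots,b_g,c_1,\ldots,c_n \mid \prod_{i=1}^g[a_i,b_i]=\prod_{j=1}^n c_j\rangle$. Let $G=SU(3)$, $T\subset G$ the diagonal maximal torus. An $n$-tuple $(t_1,\ldots,t_n)$ in $T$ is generic if each $t_j$ has centralizer $T$ in $G$ and no product $\lambda_1\cdots\lambda_n$ with $\lambda_i$ an eigenvalue of $t_i$ equals $1$. Let $S_g(t_1,\ldots,t_n) := \{\rho\in\mathrm{Hom}(\pi_1(\Sigma\setminus\{p_1,\ldots,p_n\}),G)\mid\rho(c_i)\sim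 t_i\ \forall i\}/G$ (conjugation quotient), and $V^l_g(t_1,\ldots,t_n):=\{\rho\mid\rho(c_l)=t_l,\ \rho(c_i)\sim t_i\ \forall i\}$, a $T$-bundle over $S_g(t_1,\ldots,t_n)$ under conjugation. For $1\le j,k\le 3$ let $\mathbb{C}_{(jk)}$ (resp. $\mathbb{C}_{(j)}$) be the representation of $T$ in which $\mathrm{diag}(e^{i\theta_1},e^{i\theta_2},e^{i\theta_3})$ acts by $e^{i(\theta_j-\theta_k)}$ (resp. $e^{i\theta_j}$), and $L^l_{jk}$ (resp. $L^l_j$) the associated line bundle $(V^l_g(t_1,\ldots,t_n)\times\mathbb{C}_{(jk)})/T$ (resp. with $\mathbb{C}_{(j)}$). Two kinds of sections are used (note the comma distinguishing them). (i) For a generator $x\in\{a_1,\ldots,a_g,b_1,\ldots,b_g,c_1,\ldots,c_n\}\setminus\{c_l\}$, $s^l_{jk}(x)$ is the section of $L^l_{jk}$ induced by the $T$-equivariant map $V^l_g(t_1,\ldots,t_n)\to\mathbb{C}_{(jk)}$, $\rho\mapsto(\rho(x))_{jk}$ (the $(j,k)$ matrix entry); it vanishes at $[\rho]$ iff $(\rho(x))_{jk}=0$ for a representative $\rho\in V^l_g(t_1,\ldots,t_n)$. (ii) For $c_{i'}$ with $i'\neq l$, $s^l_{j,k}(c_{i'})$ is a section of $L^l_j$ defined via a matrix $A\in SU(3)$ with $A\rho(c_{i'})A^{-1}=t_{i'}$ (for a representative $\rho\in V^l_g(t_1,\ldots,t_n)$; $A$ is unique up to left multiplication by $T$), taking value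 given by the entry $A_{jk}$; it vanishes at $[\rho]$ iff $A_{jk}=0$, equivalently iff the $k$-th coordinate of an eigenvector of $\rho(c_{i'})$ with eigenvalue $(t_{i'})_{jj}$ is zero. *)

theory Defs
  imports "HOL-Analysis.Analysis"
begin

type_synonym mat3 = "complex^3^3"

definition ctrans :: "mat3 \<Rightarrow> mat3" where
  "ctrans M = (\<chi> r s. cnj (M $ s $ r))"

definition SU3 :: "mat3 set" where
  "SU3 = {U. U ** ctrans U = mat 1 \<and> det U = 1}"

definition torus :: "mat3 set" where
  "torus = {M \<in> SU3. \<forall>r s. r \<noteq> s \<longrightarrow> M $ r $ s = 0}"

definition centralizer :: "mat3 \<Rightarrow> mat3 set" where
  "centralizer M = {U \<in> SU3. U ** M = M ** U}"

definition is_eigenvalue :: "mat3 \<Rightarrow> complex \<Rightarrow> bool" where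
  "is_eigenvalue M ev \<longleftrightarrow> (\<exists>v. v \<noteq> 0 \<and> M *v v = ev *s v)"

definition generic :: "nat \<Rightarrow> (nat \<Rightarrow> mat3) \<Rightarrow> bool" where
  "generic n t \<longleftrightarrow>
     (\<forall>j\<in>{1..n}. t j \<in> torus \<and> centralizer (t j) = torus) \<and>
     (\<forall>ev. (\<forall>j\<in>{1..n}. is_eigenvalue (t j) (ev j)) \<longrightarrow> (\<Prod>j\<in>{1..n}. ev j) \<noteq> 1)"

text \<open>Generators of the fundamental group of the punctured surface.\<close>
datatype gen = GA nat | GB nat | GC nat

definition gens :: "nat \<Rightarrow> nat \<Rightarrow> gen set" where
  "gens g n = GA ` {1..g} \<union> GB ` {1..g} \<union> GC ` {1..n}"

definition mprod :: "mat3 list \<Rightarrow> mat3" where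
  "mprod Ms = foldr (\<lambda>M N. M ** N) Ms (mat 1)"

definition commutator :: "mat3 \<Rightarrow> mat3 \<Rightarrow> mat3" where
  "commutator X Y = X ** Y ** ctrans X ** ctrans Y"

text \<open>Hom(pi_1, SU(3)): assignments of SU(3) elements to the generators satisfying
  prod_i [a_i,b_i] = prod_j c_j (products ordered left to right); values on
  non-generators are normalised to the identity.\<close>
definition Hom :: "nat \<Rightarrow> nat \<Rightarrow> (gen \<Rightarrow> mat3) set" where
  "Hom g n = {\<rho>. (\<forall>x\<in>gens g n. \<rho> x \<in> SU3) \<and> (\<forall>x. x \<notin> gens g n \<longrightarrow> \<rho> x = mat 1) \<and>
     mprod (map (\<lambda>i. commutator (\<rho> (GA i)) (\<rho> (GB i))) [1..<g+1])
       = mprod (map (\<lambda>j. \<rho> (GC j)) [1..<n+1])}"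

definition conj_rel :: "mat3 \<Rightarrow> mat3 \<Rightarrow> bool" (infix "\<sim>\<^sub>G" 50) where
  "X \<sim>\<^sub>G Y \<longleftrightarrow> (\<exists>P\<in>SU3. X = P ** Y ** ctrans P)"

definition Hom_t :: "nat \<Rightarrow> nat \<Rightarrow> (nat \<Rightarrow> mat3) \<Rightarrow> (gen \<Rightarrow> mat3) set" where
  "Hom_t g n t = {\<rho> \<in> Hom g n. \<forall>i\<in>{1..n}. \<rho> (GC i) \<sim>\<^sub>G t i}"

definition conj_act :: "mat3 \<Rightarrow> (gen \<Rightarrow> mat3) \<Rightarrow> (gen \<Rightarrow> mat3)" where
  "conj_act P \<rho> = (\<lambda>x. P ** \<rho> x ** ctrans P)"

definition orbit :: "(gen \<Rightarrow> mat3) \<Rightarrow> (gen \<Rightarrow> mat3) set" where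
  "orbit \<rho> = {conj_act P \<rho> | P. P \<in> SU3}"

definition S :: "nat \<Rightarrow> nat \<Rightarrow> (nat \<Rightarrow> mat3) \<Rightarrow> (gen \<Rightarrow> mat3) set set" where
  "S g n t = orbit ` Hom_t g n t"

definition V :: "nat \<Rightarrow> nat \<Rightarrow> (nat \<Rightarrow> mat3) \<Rightarrow> nat \<Rightarrow> (gen \<Rightarrow> mat3) set" where
  "V g n t l = {\<rho> \<in> Hom_t g n t. \<rho> (GC l) = t l}"

text \<open>Vanishing of s^l_{jk}(x) at the class Q.\<close>
definition vanish_entry ::
  "nat \<Rightarrow> nat \<Rightarrow> (nat \<Rightarrow> mat3) \<Rightarrow> nat \<Rightarrow> 3 \<Rightarrow> 3 \<Rightarrow> gen \<Rightarrow> (gen \<Rightarrow> mat3) set \<Rightarrow> bool" where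
  "vanish_entry g n t l j k x Q \<longleftrightarrow> (\<exists>\<rho>\<in>Q \<inter> V g n t l. \<rho> x $ j $ k = 0)"

text \<open>Vanishing of s^l_{j,k}(c_{i'}) at the class Q.\<close>
definition vanish_eig ::
  "nat \<Rightarrow> nat \<Rightarrow> (nat \<Rightarrow> mat3) \<Rightarrow> nat \<Rightarrow> 3 \<Rightarrow> 3 \<Rightarrow> nat \<Rightarrow> (gen \<Rightarrow> mat3) set \<Rightarrow> bool" where
  "vanish_eig g n t l j k i' Q \<longleftrightarrow>
     (\<exists>\<rho>\<in>Q \<inter> V g n t l. \<exists>A\<in>SU3. A ** \<rho> (GC i') ** ctrans A = t i' \<and> A $ j $ k = 0)"

end

theory Submission
  imports Defs
begin

text \<open>Fix a representative \<open>\<rho>\<close> of a class with \<open>\<rho>(c\<^sub>l) = t\<^sub>l\<close>. Since the centralizer of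
  \<open>t\<^sub>l\<close> is \<open>T\<close>, two such representatives differ by conjugation with a diagonal matrix,
  which only rescales matrix entries; likewise a matrix \<open>A\<close> with \<open>A \<rho>(c\<^sub>m) A\<^sup>-\<^sup>1 = t\<^sub>m\<close> is
  unique up to left multiplication by \<open>T\<close>. So the vanishing of each section may be tested on
  any representative and any such \<open>A\<close>. If \<open>A\<^sub>u\<^sub>j = A\<^sub>u\<^sub>k = 0\<close>, unitarity forces row \<open>u\<close> and
  column \<open>i\<close> of \<open>A\<close> to vanish outside their common entry. Then \<open>\<rho>' = A \<rho> A\<^sup>-\<^sup>1\<close> represents
  the same class with \<open>\<rho>'(c\<^sub>m) = t\<^sub>m\<close>, \<open>\<rho>'(x)\<^sub>u\<^sub>v = A\<^sub>u\<^sub>i \<rho>(x)\<^sub>i\<^sub>i conj(A\<^sub>v\<^sub>i) = 0\<close> whenever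
  \<open>\<rho>(x)\<^sub>i\<^sub>j = \<rho>(x)\<^sub>i\<^sub>k = 0\<close>, and \<open>A\<^sup>-\<^sup>1\<close> conjugates \<open>\<rho>'(c\<^sub>l)\<close> to \<open>t\<^sub>l\<close> with
  \<open>(A\<^sup>-\<^sup>1)\<^sub>i\<^sub>v = 0\<close>. Exchanging the roles of \<open>(l,i,j,k)\<close> and \<open>(m,u,v,w)\<close> gives the other
  inclusion.\<close>

lemma ctrans_ctrans [simp]: "ctrans (ctrans A) = A"
  by (simp add: ctrans_def vec_eq_iff)

lemma ctrans_matrix_mul: "ctrans (A ** B) = ctrans B ** ctrans A"
  by (simp add: ctrans_def vec_eq_iff matrix_matrix_mult_def mult.commute)

lemma SU3_right_inverse: "P \<in> SU3 \<Longrightarrow> P ** ctrans P = mat 1"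
  by (simp add: SU3_def)

lemma SU3_left_inverse: "P \<in> SU3 \<Longrightarrow> ctrans P ** P = mat 1"
  by (simp add: SU3_def matrix_left_right_inverse)

lemma SU3_matrix_mul:
  assumes "P \<in> SU3" "R \<in> SU3"
  shows "P ** R \<in> SU3"
proof -
  have "P ** R ** ctrans (P ** R) = P ** (R ** ctrans R) ** ctrans P"
    by (simp add: ctrans_matrix_mul matrix_mul_assoc)
  also have "\<dots> = mat 1"
    using assms by (simp add: SU3_right_inverse)
  finally show ?thesis
    using assms by (simp add: SU3_def det_mul)
qed

lemma SU3_ctrans:
  assumes "P \<in> SU3"
  shows "ctrans P \<in> SU3"
proof -
  have "det P * det (ctrans P) = 1"
    using assms det_mul[of P "ctrans P"] by (simp add: SU3_def)
  then have "det (ctrans P) = 1"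
    using assms by (simp add: SU3_def)
  then show ?thesis
    using SU3_left_inverse[OF assms] by (simp add: SU3_def)
qed

lemma conj_act_conj_act: "conj_act P (conj_act R \<rho>) = conj_act (P ** R) \<rho>"
  by (simp add: conj_act_def ctrans_matrix_mul matrix_mul_assoc)

lemma mprod_conj:
  assumes "P \<in> SU3"
  shows "mprod (map (\<lambda>x. P ** f x ** ctrans P) xs) = P ** mprod (map f xs) ** ctrans P"
proof (induction xs)
  case Nil
  then show ?case
    using assms by (simp add: mprod_def SU3_right_inverse)
next
  case (Cons a xs)
  have "mprod (map (\<lambda>x. P ** f x ** ctrans P) (a # xs))
      = P ** f a ** (ctrans P ** P) ** mprod (map f xs) ** ctrans P"
    using Cons by (simp add: mprod_def matrix_mul_assoc)
  also have "\<dots> = P ** mprod (map f (a # xs)) ** ctrans P"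
    using assms by (simp add: SU3_left_inverse mprod_def matrix_mul_assoc)
  finally show ?case .
qed

lemma commutator_conj:
  assumes "P \<in> SU3"
  shows "commutator (P ** X ** ctrans P) (P ** Y ** ctrans P) = P ** commutator X Y ** ctrans P"
proof -
  have "commutator (P ** X ** ctrans P) (P ** Y ** ctrans P)
     = P ** X ** (ctrans P ** P) ** Y ** (ctrans P ** P) ** ctrans X ** (ctrans P ** P)
         ** ctrans Y ** ctrans P"
    by (simp add: commutator_def ctrans_matrix_mul matrix_mul_assoc)
  also have "\<dots> = P ** commutator X Y ** ctrans P"
    using assms by (simp add: SU3_left_inverse commutator_def matrix_mul_assoc)
  finally show ?thesis .
qed

lemma conj_rel_conj_left:
  assumes "P \<in> SU3" "X \<sim>\<^sub>G Y"
  shows "P ** X ** ctrans P \<sim>\<^sub>G Y"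
proof -
  obtain R where R: "R \<in> SU3" "X = R ** Y ** ctrans R"
    using assms(2) by (auto simp: conj_rel_def)
  have "P ** X ** ctrans P = (P ** R) ** Y ** ctrans (P ** R)"
    by (simp add: R ctrans_matrix_mul matrix_mul_assoc)
  then show ?thesis
    using SU3_matrix_mul[OF assms(1) R(1)] by (auto simp: conj_rel_def)
qed

lemma Hom_t_conj_act:
  assumes "\<rho> \<in> Hom_t g n t" "P \<in> SU3"
  shows "conj_act P \<rho> \<in> Hom_t g n t"
proof -
  have hom: "\<rho> \<in> Hom g n" and cls: "\<forall>i\<in>{1..n}. \<rho> (GC i) \<sim>\<^sub>G t i"
    using assms(1) by (auto simp: Hom_t_def)
  have "mprod (map (\<lambda>i. commutator (conj_act P \<rho> (GA i)) (conj_act P \<rho> (GB i))) [1..<g+1])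
      = mprod (map (\<lambda>j. conj_act P \<rho> (GC j)) [1..<n+1])"
    using hom assms(2)
    by (simp add: conj_act_def commutator_conj Hom_def
        mprod_conj[where f = "\<lambda>i. commutator (\<rho> (GA i)) (\<rho> (GB i))"]
        mprod_conj[where f = "\<lambda>j. \<rho> (GC j)"])
  then show ?thesis
    using hom cls assms(2)
    by (auto simp: Hom_t_def Hom_def conj_act_def conj_rel_conj_left SU3_right_inverse
        intro!: SU3_matrix_mul SU3_ctrans)
qed

lemma S_conj_act_mem:
  assumes "Q \<in> S g n t" "\<rho> \<in> Q" "P \<in> SU3"
  shows "conj_act P \<rho> \<in> Q"
proof -
  obtain \<rho>\<^sub>0 R where "Q = orbit \<rho>\<^sub>0" "R \<in> SU3" "\<rho> = conj_act R \<rho>\<^sub>0"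
    using assms(1,2) by (auto simp: S_def orbit_def)
  then show ?thesis
    using SU3_matrix_mul[OF assms(3)] by (auto simp: orbit_def conj_act_conj_act)
qed

lemma S_subset_Hom_t: "Q \<in> S g n t \<Longrightarrow> Q \<subseteq> Hom_t g n t"
  by (auto simp: S_def orbit_def intro: Hom_t_conj_act)

definition diagonal_matrix :: "'a::zero^'n^'n \<Rightarrow> bool" where
  "diagonal_matrix D \<longleftrightarrow> (\<forall>r s. r \<noteq> s \<longrightarrow> D $ r $ s = 0)"

lemma torus_diagonal_matrix: "D \<in> torus \<Longrightarrow> diagonal_matrix D"
  by (simp add: torus_def diagonal_matrix_def)

lemma diagonal_matrix_mul_left:
  fixes D :: "'a::semiring_1^'n^'n"
  assumes "diagonal_matrix D"
  shows "(D ** M) $ a $ b = D $ a $ a * M $ a $ b"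
proof -
  have "(D ** M) $ a $ b = (\<Sum>r\<in>UNIV. D $ a $ r * M $ r $ b)"
    by (simp add: matrix_matrix_mult_def)
  also have "\<dots> = (\<Sum>r\<in>UNIV. if r = a then D $ a $ a * M $ a $ b else 0)"
    using assms by (intro sum.cong) (auto simp: diagonal_matrix_def)
  finally show ?thesis by simp
qed

lemma diagonal_matrix_mul_right:
  fixes D :: "'a::semiring_1^'n^'n"
  assumes "diagonal_matrix D"
  shows "(M ** D) $ a $ b = M $ a $ b * D $ b $ b"
proof -
  have "(M ** D) $ a $ b = (\<Sum>r\<in>UNIV. M $ a $ r * D $ r $ b)"
    by (simp add: matrix_matrix_mult_def)
  also have "\<dots> = (\<Sum>r\<in>UNIV. if r = b then M $ a $ b * D $ b $ b else 0)"
    using assms by (intro sum.cong) (auto simp: diagonal_matrix_def)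
  finally show ?thesis by simp
qed

lemma diagonal_matrix_conj:
  assumes "diagonal_matrix D"
  shows "(D ** M ** ctrans D) $ a $ b = D $ a $ a * M $ a $ b * cnj (D $ b $ b)"
proof -
  have "diagonal_matrix (ctrans D)"
    using assms by (simp add: diagonal_matrix_def ctrans_def)
  then show ?thesis
    using assms by (simp add: diagonal_matrix_mul_left diagonal_matrix_mul_right ctrans_def)
qed

lemma V_representatives_torus_conj:
  assumes "generic n t" "l \<in> {1..n}" "Q \<in> S g n t"
    and "\<rho>\<^sub>1 \<in> Q \<inter> V g n t l" "\<rho>\<^sub>2 \<in> Q \<inter> V g n t l"
  shows "\<exists>D\<in>torus. \<rho>\<^sub>1 = conj_act D \<rho>\<^sub>2"
proof -
  obtain \<rho>\<^sub>0 P\<^sub>1 P\<^sub>2 where P: "P\<^sub>1 \<in> SU3" "\<rho>\<^sub>1 = conj_act P\<^sub>1 \<rho>\<^sub>0" "P\<^sub>2 \<in> SU3" "\<rho>\<^sub>2 = conj_act P\<^sub>2 \<rho>\<^sub>0"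
    using assms(3-5) by (auto simp: S_def orbit_def)
  define D where "D = P\<^sub>1 ** ctrans P\<^sub>2"
  have D: "D \<in> SU3"
    unfolding D_def using P by (simp add: SU3_matrix_mul SU3_ctrans)
  have \<rho>\<^sub>1: "\<rho>\<^sub>1 = conj_act D \<rho>\<^sub>2"
    by (simp add: P conj_act_conj_act D_def matrix_mul_assoc[symmetric] SU3_left_inverse)
  have "t l = D ** t l ** ctrans D"
    using \<rho>\<^sub>1 assms(4,5) by (simp add: V_def conj_act_def)
  then have "t l ** D = D ** t l ** (ctrans D ** D)"
    by (metis matrix_mul_assoc)
  then have "D \<in> centralizer (t l)"
    using D SU3_left_inverse[OF D] by (simp add: centralizer_def)
  then show ?thesis
    using assms(1,2) \<rho>\<^sub>1 by (auto simp: generic_def)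
qed

lemma vanish_entry_iff:
  assumes "generic n t" "l \<in> {1..n}" "Q \<in> S g n t" "\<rho> \<in> Q \<inter> V g n t l"
  shows "vanish_entry g n t l a b x Q \<longleftrightarrow> \<rho> x $ a $ b = 0"
proof
  assume "vanish_entry g n t l a b x Q"
  then obtain \<rho>' where \<rho>': "\<rho>' \<in> Q \<inter> V g n t l" "\<rho>' x $ a $ b = 0"
    by (auto simp: vanish_entry_def)
  obtain D where "D \<in> torus" "\<rho> = conj_act D \<rho>'"
    using V_representatives_torus_conj[OF assms \<rho>'(1)] by blast
  then show "\<rho> x $ a $ b = 0"
    using \<rho>'(2) by (simp add: conj_act_def diagonal_matrix_conj torus_diagonal_matrix)
qed (use assms(4) in \<open>auto simp: vanish_entry_def\<close>)

lemma conjugator_entry_zero: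
  assumes "centralizer T = torus" "B \<in> SU3" "B' \<in> SU3"
    and "B ** X ** ctrans B = T" "B' ** X ** ctrans B' = T" "B' $ a $ b = 0"
  shows "B $ a $ b = 0"
proof -
  define E where "E = B ** ctrans B'"
  have E: "E \<in> SU3"
    unfolding E_def using assms(2,3) by (simp add: SU3_matrix_mul SU3_ctrans)
  have "E ** T = B ** (ctrans B' ** B') ** X ** ctrans B'"
    unfolding E_def assms(5)[symmetric] by (simp add: matrix_mul_assoc)
  also have "\<dots> = B ** X ** (ctrans B ** B) ** ctrans B'"
    using assms(2,3) by (simp add: SU3_left_inverse)
  also have "\<dots> = T ** E"
    unfolding E_def assms(4)[symmetric] by (simp add: matrix_mul_assoc)
  finally have "E \<in> torus"
    using E assms(1) by (auto simp: centralizer_def)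
  moreover have "E ** B' = B"
    using SU3_left_inverse[OF assms(3)] by (metis E_def matrix_mul_assoc matrix_mul_rid)
  ultimately show ?thesis
    using assms(6) by (metis diagonal_matrix_mul_left torus_diagonal_matrix mult_zero_right)
qed

lemma vanish_eig_iff:
  assumes gen: "generic n t" and l: "l \<in> {1..n}" and c: "c \<in> {1..n}" and Q: "Q \<in> S g n t"
    and \<rho>: "\<rho> \<in> Q \<inter> V g n t l"
    and B: "B \<in> SU3" "B ** \<rho> (GC c) ** ctrans B = t c"
  shows "vanish_eig g n t l a b c Q \<longleftrightarrow> B $ a $ b = 0"
proof
  assume "vanish_eig g n t l a b c Q"
  then obtain \<rho>' B' where \<rho>': "\<rho>' \<in> Q \<inter> V g n t l" and B': "B' \<in> SU3"
    "B' ** \<rho>' (GC c) ** ctrans B' = t c" "B' $ a $ b = 0"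
    by (auto simp: vanish_eig_def)
  obtain D where D: "D \<in> torus" "\<rho>' = conj_act D \<rho>"
    using V_representatives_torus_conj[OF gen l Q \<rho>' \<rho>] by blast
  have "B' ** D \<in> SU3"
    using B'(1) D(1) by (simp add: SU3_matrix_mul torus_def)
  moreover have "B' ** D ** \<rho> (GC c) ** ctrans (B' ** D) = t c"
    using B'(2) D(2) by (simp add: conj_act_def ctrans_matrix_mul matrix_mul_assoc)
  moreover have "(B' ** D) $ a $ b = 0"
    using B'(3) D(1) by (simp add: diagonal_matrix_mul_right torus_diagonal_matrix)
  moreover have "centralizer (t c) = torus"
    using gen c by (simp add: generic_def)
  ultimately show "B $ a $ b = 0"
    using conjugator_entry_zero B by blast
qed (use \<rho> B in \<open>auto simp: vanish_eig_def\<close>)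

lemma sum_UNIV_3:
  assumes "distinct [i, j, k :: 3]"
  shows "sum f UNIV = f i + f j + f k"
proof -
  have UNIV_ijk: "UNIV = {i, j, k}"
    using assms exhaust_3 by (smt (verit) UNIV_eq_I distinct_length_2_or_more
        distinct_singleton insertCI)
  then show ?thesis
    using assms by (simp add: UNIV_ijk add.assoc)
qed

lemma SU3_column_zero_off_row:
  assumes B: "B \<in> SU3" and ijk: "distinct [i, j, k]"
    and "B $ u $ j = 0" "B $ u $ k = 0" "v \<noteq> u"
  shows "B $ v $ i = 0"
proof -
  have row: "(B ** ctrans B) $ u $ r = B $ u $ i * cnj (B $ r $ i)" for r
    using assms(3,4) by (simp add: matrix_matrix_mult_def ctrans_def sum_UNIV_3[OF ijk])
  have "B $ u $ i \<noteq> 0"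
    using row[of u] SU3_right_inverse[OF B] by (auto simp: mat_def)
  moreover have "(B ** ctrans B) $ u $ v = 0"
    using assms(5) SU3_right_inverse[OF B] by (simp add: mat_def)
  ultimately show ?thesis
    using row[of v] by simp
qed

lemma SU3_conj_entry_zero:
  assumes B: "B \<in> SU3" and ijk: "distinct [i, j, k]"
    and "B $ u $ j = 0" "B $ u $ k = 0" "M $ i $ j = 0" "M $ i $ k = 0" "v \<noteq> u"
  shows "(B ** M ** ctrans B) $ u $ v = 0"
proof -
  have "(B ** M) $ u $ s = B $ u $ i * M $ i $ s" for s
    using assms(3,4) by (simp add: matrix_matrix_mult_def sum_UNIV_3[OF ijk])
  then have "(B ** M ** ctrans B) $ u $ v = B $ u $ i * M $ i $ i * cnj (B $ v $ i)"
    using assms(5,6)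
    by (simp add: matrix_matrix_mult_def[of "B ** M"] ctrans_def sum_UNIV_3[OF ijk])
  then show ?thesis
    using SU3_column_zero_off_row[OF assms(1-4,7)] by simp
qed

lemma vanishing_locus_subset:
  assumes gen: "generic n t" and l: "l \<in> {1..n}" and m: "m \<in> {1..n}"
    and ijk: "distinct [i, j, k]" and "u \<noteq> v" "u \<noteq> w" and Q: "Q \<in> S g n t"
    and entries: "\<forall>x\<in>A. vanish_entry g n t l i j x Q \<and> vanish_entry g n t l i k x Q"
    and "vanish_eig g n t l u j m Q" "vanish_eig g n t l u k m Q"
  shows "(\<forall>x\<in>A. vanish_entry g n t m u v x Q \<and> vanish_entry g n t m u w x Q)
     \<and> vanish_eig g n t m i v l Q \<and> vanish_eig g n t m i w l Q"
proof -
  obtain \<rho> B where \<rho>: "\<rho> \<in> Q \<inter> V g n t l" and B: "B \<in> SU3"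
    "B ** \<rho> (GC m) ** ctrans B = t m" "B $ u $ j = 0"
    using assms(9) by (auto simp: vanish_eig_def)
  have Buk: "B $ u $ k = 0"
    using vanish_eig_iff[OF gen l m Q \<rho> B(1,2)] assms(10) by blast
  have \<rho>_entries: "\<rho> x $ i $ j = 0" "\<rho> x $ i $ k = 0" if "x \<in> A" for x
    using entries that vanish_entry_iff[OF gen l Q \<rho>] by blast+
  define \<rho>' where "\<rho>' = conj_act B \<rho>"
  have \<rho>': "\<rho>' \<in> Q \<inter> V g n t m"
    using \<rho> B S_conj_act_mem[OF Q] Hom_t_conj_act S_subset_Hom_t[OF Q]
    by (auto simp: V_def \<rho>'_def conj_act_def)
  have "ctrans B ** \<rho>' (GC l) ** ctrans (ctrans B) = (ctrans B ** B) ** t l ** (ctrans B ** B)"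
    using \<rho> by (simp add: \<rho>'_def conj_act_def V_def matrix_mul_assoc)
  then have B_inv: "ctrans B ** \<rho>' (GC l) ** ctrans (ctrans B) = t l"
    using SU3_left_inverse[OF B(1)] by simp
  have "vanish_entry g n t m u r x Q" if "x \<in> A" "r \<noteq> u" for x r
    using vanish_entry_iff[OF gen m Q \<rho>'] SU3_conj_entry_zero[OF B(1) ijk B(3) Buk]
      \<rho>_entries[OF that(1)] that(2) by (simp add: \<rho>'_def conj_act_def)
  moreover have "vanish_eig g n t m i r l Q" if "r \<noteq> u" for r
    using vanish_eig_iff[OF gen m l Q \<rho>' SU3_ctrans[OF B(1)] B_inv]
      SU3_column_zero_off_row[OF B(1) ijk B(3) Buk that] by (simp add: ctrans_def)
  ultimately show ?thesis
    using assms(5,6) by auto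
qed

theorem lemma2p6:
  fixes g n l m :: nat and t :: "nat \<Rightarrow> mat3" and A :: "gen set"
    and i j k u v w :: 3
  assumes "g \<ge> 2" and "n \<ge> 2"
    and "generic n t"
    and "l \<in> {1..n}" and "m \<in> {1..n}" and "l \<noteq> m"
    and "A \<subseteq> GA ` {1..g} \<union> GB ` {1..g} \<union> GC ` ({1..n} - {l, m})"
    and "distinct [i, j, k]" and "distinct [u, v, w]"
  shows "{Q \<in> S g n t. (\<forall>x\<in>A. vanish_entry g n t l i j x Q \<and> vanish_entry g n t l i k x Q)
              \<and> vanish_eig g n t l u j m Q \<and> vanish_eig g n t l u k m Q}
       = {Q \<in> S g n t. (\<forall>x\<in>A. vanish_entry g n t m u v x Q \<and> vanish_entry g n t m u w x Q)
              \<and> vanish_eig g n t m i v l Q \<and> vanish_eig g n t m i w l Q}"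
proof -
  have "i \<noteq> j" "i \<noteq> k" "u \<noteq> v" "u \<noteq> w"
    using assms(8,9) by auto
  then show ?thesis
    using vanishing_locus_subset[OF assms(3-5,8), where u = u and v = v and w = w and g = g]
      vanishing_locus_subset[OF assms(3,5,4,9), where u = i and v = j and w = k and g = g]
    by blast
qed

end
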